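(* Let $S\subseteq \mathbb{R}^n/\mathbb{R}\mathbb{1}$ be a finite set of sites and $k$ a positive integer with $k\le|S|$. Then the expectation value of the competitive factor $\ell(\mathcal{C})/\ell^*$ of the clustering $\mathcal{C}$ produced by the tropical $k$-means++ algorithm on $S$ is at most $2n(2+\log k)$.
   Context: $\mathbb{1}=(1,\dots,1)\in\mathbb{R}^n$, $\mathbb{R}^n/\mathbb{R}\mathbb{1}$ is the tropical torus, and $d_{\Delta}(x,y)=\sum_{i=1}^n (y_i-x_i) + n\max_{i}(x_i-y_i)$ is the asymmetric tropical distance (invariant under adding multiples of $\mathbb{1}$ to either argument, hence defined on the torus). For a finite set $C$ of points in the torus, the Fermat--Weber set $\mathrm{FW}(C)$ is the set of minimizers $y$ of $\sum_{s\in C}d_\Delta(s,y)$; it is a polytope closed under tropical linear combinations $\max_i(v_i+\lambda_i\mathbb{1})$, with a minimal finite generating set $v_1,\dots,v_l$ under tropical linear combinations (tropical vertices); the tropical median of $C$ is $\frac1l\sum_i v_i$. Tropical $k$-means algorithm: from initial centroids $c_1,\dots,c_k$, alternate (A-step) $C_j\leftarrow\{s\in S : j=\arg\min_i d_\Delta(s,c_i)\}$ and (M-step) $c_j\leftarrow$ tropical median of $C_j$, until assignments do not change. Tropical $k$-means++: the initial centroids are chosen by taking $c_1\in S$ uniformly at random and, for $j=2,\dots,k$, choosing $c_j\in S$ at random where $s\in S$ is chosen with probability $\min_{i<j}d_\Delta(s,c_i)/\sum_{t\in S}\min_{i<j}d_\Delta(t,c_i)$; then the tropical $k$-means algorithm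 is run. For a clustering $\mathcal{C}=\{C_1,\dots,C_k\}$ of $S$ with centroids $c_i$ (the tropical medians of the $C_i$), its loss is $\ell(\mathcal{C})=\sum_{i}\sum_{s\in C_i}d_\Delta(s,c_i)$, and $\ell^*$ denotes the global minimum over choices of $c_1,\dots,c_k$ of $\sum_{s\in S}\min_{i\in[k]}d_\Delta(s,c_i)$. The competitive factor of $\mathcal{C}$ is $\ell(\mathcal{C})/\ell^*$. *)

theory Defs
  imports "HOL-Analysis.Analysis" "HOL-Probability.Probability"
begin

text \<open>Points of the tropical torus R^n / R1 are represented by vectors in real^'n
  (n = CARD('n)); everything below is invariant under adding multiples of 1.\<close>

definition tequiv :: "real^'n \<Rightarrow> real^'n \<Rightarrow> bool" where
  "tequiv x y \<longleftrightarrow> (\<exists>c::real. \<forall>i. y $ i = x $ i + c)"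

definition tdist :: "real^'n \<Rightarrow> real^'n \<Rightarrow> real" where
  "tdist x y = (\<Sum>i\<in>UNIV. y $ i - x $ i) + real CARD('n) * Max (range (\<lambda>i. x $ i - y $ i))"

definition FW :: "(real^'n) set \<Rightarrow> (real^'n) set" where
  "FW C = {y. \<forall>z. (\<Sum>s\<in>C. tdist s y) \<le> (\<Sum>s\<in>C. tdist s z)}"

definition tspan :: "(real^'n) set \<Rightarrow> (real^'n) set" where
  "tspan V = {x. \<exists>lam :: real^'n \<Rightarrow> real. x = (\<chi> i. Max ((\<lambda>v. v $ i + lam v) ` V))}"

definition tvertices :: "(real^'n) set \<Rightarrow> (real^'n) set \<Rightarrow> bool" where
  "tvertices C V \<longleftrightarrow> finite V \<and> V \<noteq> {} \<and> tspan V = FW C \<and> (\<forall>W. W \<subset> V \<longrightarrow> tspan W \<noteq> FW C)"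

text \<open>Tropical median: average of the tropical vertices (well defined up to adding
  multiples of 1, which is all that matters on the torus).\<close>
definition tmedian :: "(real^'n) set \<Rightarrow> real^'n" where
  "tmedian C = (SOME m. \<exists>V. tvertices C V \<and> m = (1 / real (card V)) *\<^sub>R (\<Sum>v\<in>V. v))"

definition valid_assign :: "(real^'n) set \<Rightarrow> nat \<Rightarrow> (nat \<Rightarrow> real^'n) \<Rightarrow> (real^'n \<Rightarrow> nat) \<Rightarrow> bool" where
  "valid_assign S k c a \<longleftrightarrow>
     (\<forall>s\<in>S. a s < k \<and> (\<forall>i<k. tdist s (c (a s)) \<le> tdist s (c i)))"

definition cluster :: "(real^'n) set \<Rightarrow> (real^'n \<Rightarrow> nat) \<Rightarrow> nat \<Rightarrow> (real^'n) set" where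
  "cluster S a j = {s\<in>S. a s = j}"

definition mstep :: "(real^'n) set \<Rightarrow> (nat \<Rightarrow> real^'n) \<Rightarrow> (real^'n \<Rightarrow> nat) \<Rightarrow> (nat \<Rightarrow> real^'n)" where
  "mstep S c a = (\<lambda>j. if cluster S a j = {} then c j else tmedian (cluster S a j))"

text \<open>a is a final assignment produced by the tropical k-means algorithm started from
  centroids c0: alternate A- and M-steps until the assignment does not change.\<close>
definition kmeans_output :: "(real^'n) set \<Rightarrow> nat \<Rightarrow> (nat \<Rightarrow> real^'n) \<Rightarrow> (real^'n \<Rightarrow> nat) \<Rightarrow> bool" where
  "kmeans_output S k c0 a \<longleftrightarrow>
    (\<exists>m::nat. \<exists>cs :: nat \<Rightarrow> nat \<Rightarrow> real^'n. \<exists>as :: nat \<Rightarrow> real^'n \<Rightarrow> nat.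
       m \<ge> 1 \<and> cs 0 = c0 \<and>
       (\<forall>t\<le>m. valid_assign S k (cs t) (as t)) \<and>
       (\<forall>t<m. cs (Suc t) = mstep S (cs t) (as t)) \<and>
       (\<forall>t. 1 \<le> t \<and> t < m \<longrightarrow> (\<exists>s\<in>S. as t s \<noteq> as (t - 1) s)) \<and>
       (\<forall>s\<in>S. as m s = as (m - 1) s) \<and>
       a = as m)"

definition kloss :: "(real^'n) set \<Rightarrow> nat \<Rightarrow> (real^'n \<Rightarrow> nat) \<Rightarrow> real" where
  "kloss S k a = (\<Sum>j<k. \<Sum>s\<in>cluster S a j. tdist s (tmedian (cluster S a j)))"

definition lstar :: "(real^'n) set \<Rightarrow> nat \<Rightarrow> real" where
  "lstar S k = Inf {(\<Sum>s\<in>S. Min ((\<lambda>i. tdist s (c i)) ` {..<k})) | c :: nat \<Rightarrow> real^'n. True}"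

definition Dmin :: "(real^'n) list \<Rightarrow> real^'n \<Rightarrow> real" where
  "Dmin cs s = Min ((\<lambda>c. tdist s c) ` set cs)"

definition kpp_next :: "(real^'n) set \<Rightarrow> (real^'n) list \<Rightarrow> (real^'n) pmf" where
  "kpp_next S cs =
     (if cs = [] \<or> (\<Sum>t\<in>S. Dmin cs t) = 0 then pmf_of_set S
      else embed_pmf (\<lambda>s. if s \<in> S then Dmin cs s / (\<Sum>t\<in>S. Dmin cs t) else 0))"

fun kpp_seeds :: "(real^'n) set \<Rightarrow> nat \<Rightarrow> (real^'n) list pmf" where
  "kpp_seeds S 0 = return_pmf []"
| "kpp_seeds S (Suc j) =
     bind_pmf (kpp_seeds S j) (\<lambda>cs. map_pmf (\<lambda>c. cs @ [c]) (kpp_next S cs))"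

end

theory Submission
  imports Defs
begin

text \<open>
  Lloyd's iteration never increases the cost: an A-step moves sites to nearer centroids, and
  an M-step replaces a centroid by the tropical median of its cluster, which is a Fermat--Weber
  point, because the tropical vertices lie in \<open>FW C\<close> and \<open>FW C\<close> is convex (the objective
  \<open>y \<mapsto> \<Sum>s\<in>C. d(s, y)\<close> is). So the final loss is at most the potential
  \<open>\<Sum>s\<in>S. min\<^sub>i d(s, c\<^sub>i)\<close> of the k-means++ seeds \<open>c\<^sub>i\<close>. Arthur and Vassilvitskii's bound
  on the expected potential only uses the triangle inequality and a bound on the asymmetry of
  the distance. Here \<open>d(y, x) \<le> (n - 1) d(x, y)\<close>, and their constant \<open>8\<close> for squared
  Euclidean distances becomes \<open>2 n\<close>: the expected potential is at most
  \<open>2 n (1 + H(k - 1)) l\<^sup>* \<le> 2 n (2 + ln k) l\<^sup>*\<close>, with \<open>H\<close> the harmonic numbers.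
\<close>

section \<open>The asymmetric tropical distance\<close>

lemma Max_range_ge: "f i \<le> Max (range (f :: 'i::finite \<Rightarrow> 'a::linorder))"
  by (rule Max_ge) auto

lemma Max_range_le_iff: "Max (range (f :: 'i::finite \<Rightarrow> 'a::linorder)) \<le> c \<longleftrightarrow> (\<forall>i. f i \<le> c)"
  by (subst Max_le_iff) auto

lemma Max_range_attained:
  obtains i where "Max (range (f :: 'i::finite \<Rightarrow> 'a::linorder)) = f i"
proof -
  have "Max (range f) \<in> range f" by (rule Max_in) auto
  then show thesis using that by blast
qed

lemma tdist_eq_sum_Max_minus:
  "tdist x y = (\<Sum>i\<in>UNIV. Max (range (\<lambda>j. x$j - y$j)) - (x$i - y$i))"
  by (simp add: tdist_def sum_subtractf sum_negf[symmetric])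

lemma tdist_nonneg: "0 \<le> tdist x y"
  unfolding tdist_eq_sum_Max_minus by (rule sum_nonneg) (simp add: Max_range_ge)

lemma coord_diff_le_tdist: "(s$i - y$i) - (s$j - y$j) \<le> tdist s y"
proof -
  have "(s$i - y$i) - (s$j - y$j) \<le> Max (range (\<lambda>l. s$l - y$l)) - (s$j - y$j)"
    using Max_range_ge[of "\<lambda>l. s$l - y$l" i] by simp
  also have "\<dots> \<le> tdist s y"
    unfolding tdist_eq_sum_Max_minus by (rule member_le_sum) (auto simp: Max_range_ge)
  finally show ?thesis .
qed

lemma tdist_triangle: "tdist x z \<le> tdist x y + tdist y (z :: real^'n)"
proof -
  have Max_le: "Max (range (\<lambda>i. x$i - z$i))
      \<le> Max (range (\<lambda>i. x$i - y$i)) + Max (range (\<lambda>i. y$i - z$i))"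
    unfolding Max_range_le_iff
    using Max_range_ge[of "\<lambda>i. x$i - y$i"] Max_range_ge[of "\<lambda>i. y$i - z$i"]
    by (smt (verit))
  have "real CARD('n) * Max (range (\<lambda>i. x$i - z$i))
      \<le> real CARD('n) * Max (range (\<lambda>i. x$i - y$i)) + real CARD('n) * Max (range (\<lambda>i. y$i - z$i))"
    using mult_left_mono[OF Max_le, of "real CARD('n)"] by (simp add: distrib_left)
  moreover have "(\<Sum>i\<in>UNIV. z$i - x$i) = (\<Sum>i\<in>UNIV. y$i - x$i) + (\<Sum>i\<in>UNIV. z$i - y$i)"
    by (simp add: sum.distrib[symmetric])
  ultimately show ?thesis unfolding tdist_def by linarith
qed

text \<open>This bound on the asymmetry of \<open>tdist\<close> is where the factor \<open>n\<close> of the theorem comes from.\<close>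

lemma tdist_commute_le: "tdist y x \<le> (real CARD('n) - 1) * tdist x (y::real^'n)"
proof -
  define M where "M = Max (range (\<lambda>i. x$i - y$i))"
  obtain i0 where i0: "Max (range (\<lambda>i. y$i - x$i)) = y$i0 - x$i0"
    using Max_range_attained by blast
  have "(\<Sum>i\<in>UNIV. x$i - y$i) = (x$i0 - y$i0) + (\<Sum>i\<in>UNIV-{i0}. x$i - y$i)"
    by (subst sum.remove[of UNIV i0]) auto
  also have "(\<Sum>i\<in>UNIV-{i0}. x$i - y$i) \<le> (\<Sum>i\<in>UNIV-{i0}. M)"
    by (rule sum_mono) (simp add: M_def Max_range_ge)
  also have "\<dots> = (real CARD('n) - 1) * M"
    by (simp add: card_Diff_singleton of_nat_diff)
  finally have "(\<Sum>i\<in>UNIV. x$i - y$i) + Max (range (\<lambda>i. y$i - x$i)) \<le> (real CARD('n) - 1) * M"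
    using i0 by simp
  then have "real CARD('n) * ((\<Sum>i\<in>UNIV. x$i - y$i) + Max (range (\<lambda>i. y$i - x$i)))
      \<le> real CARD('n) * ((real CARD('n) - 1) * M)"
    by (rule mult_left_mono) simp
  moreover have "(\<Sum>i\<in>UNIV. y$i - x$i) = - (\<Sum>i\<in>UNIV. x$i - y$i)"
    by (simp add: sum_negf[symmetric])
  ultimately show ?thesis
    unfolding tdist_def M_def by (simp add: algebra_simps)
qed

lemma tdist_add_commute_le: "tdist x y + tdist y x \<le> real CARD('n) * tdist x (y::real^'n)"
  using tdist_commute_le[of y x] by (simp add: algebra_simps)

lemma tdist_add_vec: "tdist s (y + vec c) = tdist s (y :: real^'n)"
proof -
  have "range (\<lambda>i. s$i - (y + vec c) $ i) = (\<lambda>i. (s$i - y$i) + - c) ` UNIV"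
    by auto
  then have Max_eq: "Max (range (\<lambda>i. s$i - (y + vec c) $ i)) = Max (range (\<lambda>i. s$i - y$i)) + - c"
    using Max_add_commute[of UNIV "\<lambda>i. s$i - y$i" "- c"] by (simp only:) simp
  have "(\<Sum>i\<in>UNIV. (y + vec c) $ i - s$i) = (\<Sum>i\<in>UNIV. (y$i - s$i) + c)"
    by (rule sum.cong) auto
  also have "\<dots> = (\<Sum>i\<in>UNIV. y$i - s$i) + real CARD('n) * c"
    by (simp only: sum.distrib) simp
  finally have sum_eq:
    "(\<Sum>i\<in>UNIV. (y + vec c) $ i - s$i) = (\<Sum>i\<in>UNIV. y$i - s$i) + real CARD('n) * c" .
  show ?thesis
    by (simp only: tdist_def Max_eq sum_eq) (simp add: algebra_simps)
qed

lemma sup_vec_nth: "sup y z $ i = max (y$i) (z$i :: real)"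
  by (simp add: sup_vec_def sup_real_def)

lemma inf_vec_nth: "inf y z $ i = min (y$i) (z$i :: real)"
  by (simp add: inf_vec_def inf_real_def)

text \<open>Submodularity, which makes \<open>FW C\<close> a sublattice of \<open>real^'n\<close>.\<close>

lemma tdist_sup_inf_le:
  "tdist s (sup y z) + tdist s (inf y z) \<le> tdist s y + tdist s (z :: real^'n)"
proof -
  define My where "My = Max (range (\<lambda>i. s$i - y$i))"
  define Mz where "Mz = Max (range (\<lambda>i. s$i - z$i))"
  have "s$i - y$i \<le> My" "s$i - z$i \<le> Mz" for i
    unfolding My_def Mz_def by (rule Max_range_ge)+
  then have "Max (range (\<lambda>i. s$i - sup y z $ i)) \<le> min My Mz"
    and "Max (range (\<lambda>i. s$i - inf y z $ i)) \<le> max My Mz"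
    unfolding Max_range_le_iff sup_vec_nth inf_vec_nth by (smt (verit))+
  then have "Max (range (\<lambda>i. s$i - sup y z $ i)) + Max (range (\<lambda>i. s$i - inf y z $ i)) \<le> My + Mz"
    by linarith
  then have "real CARD('n) * (Max (range (\<lambda>i. s$i - sup y z $ i)) + Max (range (\<lambda>i. s$i - inf y z $ i)))
      \<le> real CARD('n) * (My + Mz)"
    by (rule mult_left_mono) simp
  moreover have "(\<Sum>i\<in>UNIV. sup y z $ i - s$i) + (\<Sum>i\<in>UNIV. inf y z $ i - s$i)
      = (\<Sum>i\<in>UNIV. y$i - s$i) + (\<Sum>i\<in>UNIV. z$i - s$i)"
    unfolding sum.distrib[symmetric]
    by (rule sum.cong) (auto simp: sup_vec_nth inf_vec_nth max_def min_def)
  ultimately show ?thesis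
    unfolding tdist_def My_def Mz_def by (simp add: algebra_simps)
qed

section \<open>Fermat--Weber sets and tropical medians\<close>

lemma convex_on_tdist: "convex_on UNIV (tdist (s :: real^'n))"
proof
  fix t :: real and x y :: "real^'n"
  assume t: "0 < t" "t < 1"
  define w where "w = (1 - t) *\<^sub>R x + t *\<^sub>R y"
  have "s$i - w$i \<le> (1 - t) * Max (range (\<lambda>i. s$i - x$i)) + t * Max (range (\<lambda>i. s$i - y$i))" for i
  proof -
    have "s$i - w$i = (1 - t) * (s$i - x$i) + t * (s$i - y$i)"
      by (simp add: w_def algebra_simps)
    also have "\<dots> \<le> (1 - t) * Max (range (\<lambda>i. s$i - x$i)) + t * Max (range (\<lambda>i. s$i - y$i))"
      using t by (intro add_mono mult_left_mono Max_range_ge) auto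
    finally show ?thesis .
  qed
  then have "real CARD('n) * Max (range (\<lambda>i. s$i - w$i))
      \<le> real CARD('n) * ((1 - t) * Max (range (\<lambda>i. s$i - x$i)) + t * Max (range (\<lambda>i. s$i - y$i)))"
    by (intro mult_left_mono) (auto simp: Max_range_le_iff)
  moreover have "(\<Sum>i\<in>UNIV. w$i - s$i) = (1 - t) * (\<Sum>i\<in>UNIV. x$i - s$i) + t * (\<Sum>i\<in>UNIV. y$i - s$i)"
    by (simp add: w_def sum_distrib_left sum.distrib[symmetric] algebra_simps)
  ultimately show "tdist s w \<le> (1 - t) * tdist s x + t * tdist s y"
    unfolding tdist_def by (simp add: algebra_simps)
qed simp

definition fw_cost :: "(real^'n) set \<Rightarrow> real^'n \<Rightarrow> real" where
  "fw_cost C y = (\<Sum>s\<in>C. tdist s y)"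

lemma mem_FW_iff: "y \<in> FW C \<longleftrightarrow> (\<forall>z. fw_cost C y \<le> fw_cost C z)"
  by (simp add: FW_def fw_cost_def)

lemma convex_FW: "convex (FW (C :: (real^'n) set))"
proof (rule convexI)
  fix x y :: "real^'n" and u v :: real
  assume x: "x \<in> FW C" and y: "y \<in> FW C" and uv: "0 \<le> u" "0 \<le> v" "u + v = 1"
  have "fw_cost C (u *\<^sub>R x + v *\<^sub>R y) \<le> u * fw_cost C x + v * fw_cost C y"
  proof -
    have "tdist s (u *\<^sub>R x + v *\<^sub>R y) \<le> u * tdist s x + v * tdist s y" for s
      using convex_onD[OF convex_on_tdist, of v x y] uv by (simp add: eq_diff_eq[symmetric])
    then show ?thesis
      unfolding fw_cost_def by (auto simp: sum_distrib_left sum.distrib[symmetric] intro: sum_mono)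
  qed
  also have "\<dots> \<le> u * fw_cost C z + v * fw_cost C z" for z
    using x y uv unfolding mem_FW_iff by (intro add_mono mult_left_mono) auto
  finally show "u *\<^sub>R x + v *\<^sub>R y \<in> FW C"
    using uv unfolding mem_FW_iff by (metis distrib_right mult_1)
qed

lemma fw_cost_add_vec: "fw_cost C (y + vec c) = fw_cost C y"
  by (simp add: fw_cost_def tdist_add_vec)

lemma add_vec_mem_FW: "y \<in> FW C \<Longrightarrow> y + vec c \<in> FW C"
  by (simp add: mem_FW_iff fw_cost_add_vec)

lemma sup_mem_FW: "y \<in> FW C \<Longrightarrow> z \<in> FW C \<Longrightarrow> sup y z \<in> FW C"
  and inf_mem_FW: "y \<in> FW C \<Longrightarrow> z \<in> FW C \<Longrightarrow> inf y z \<in> FW C"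
proof -
  assume "y \<in> FW C" "z \<in> FW C"
  then have "fw_cost C y \<le> fw_cost C w" "fw_cost C z \<le> fw_cost C w" for w
    by (auto simp: mem_FW_iff)
  moreover have "fw_cost C (sup y z) + fw_cost C (inf y z) \<le> fw_cost C y + fw_cost C z"
    unfolding fw_cost_def sum.distrib[symmetric] by (rule sum_mono) (rule tdist_sup_inf_le)
  ultimately show "sup y z \<in> FW C" "inf y z \<in> FW C"
    unfolding mem_FW_iff by (smt (verit))+
qed

lemma Sup_vec_nth_finite:
  "finite Q \<Longrightarrow> Q \<noteq> {} \<Longrightarrow> Sup Q $ i = Max ((\<lambda>q. q$i) ` Q)" for Q :: "(real^'n) set"
  by (simp add: Sup_vec_def cSup_eq_Max)

lemma Inf_vec_nth_finite:
  "finite Q \<Longrightarrow> Q \<noteq> {} \<Longrightarrow> Inf Q $ i = Min ((\<lambda>q. q$i) ` Q)" for Q :: "(real^'n) set"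
  by (simp add: Inf_vec_def cInf_eq_Min)

lemma Sup_mem_FW: "finite Q \<Longrightarrow> Q \<noteq> {} \<Longrightarrow> Q \<subseteq> FW C \<Longrightarrow> Sup Q \<in> FW C"
  by (induction Q rule: finite_ne_induct) (auto simp: cSup_insert bdd_above_finite sup_mem_FW)

lemma Inf_mem_FW: "finite Q \<Longrightarrow> Q \<noteq> {} \<Longrightarrow> Q \<subseteq> FW C \<Longrightarrow> Inf Q \<in> FW C"
  by (induction Q rule: finite_ne_induct) (auto simp: cInf_insert bdd_below_finite inf_mem_FW)

lemma tspan_eq_range_Sup:
  assumes "finite V" "V \<noteq> {}"
  shows "tspan V = range (\<lambda>lam. Sup ((\<lambda>v. v + vec (lam v)) ` V))"
proof -
  have "(\<chi> i. Max ((\<lambda>v. v $ i + lam v) ` V)) = Sup ((\<lambda>v. v + vec (lam v)) ` V)" for lam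
    using assms by (simp add: vec_eq_iff Sup_vec_nth_finite image_image)
  then show ?thesis
    unfolding tspan_def by auto
qed

lemma tspan_subset_FW:
  assumes "finite V" "V \<noteq> {}" "V \<subseteq> FW C"
  shows "tspan V \<subseteq> FW C"
  using assms by (auto simp: tspan_eq_range_Sup intro!: Sup_mem_FW add_vec_mem_FW)

lemma mem_tspan:
  assumes "finite V" "v \<in> V"
  shows "v \<in> tspan V"
proof -
  define lam where "lam u = Min (range (\<lambda>j. v$j - u$j))" for u
  have "lam u \<le> v$i - u$i" for u i
    unfolding lam_def by (rule Min_le) auto
  moreover have "lam v = 0"
    by (simp add: lam_def)
  ultimately have "Max ((\<lambda>u. u$i + lam u) ` V) = v$i" for i
    using assms by (intro Max_eqI) (force simp: algebra_simps)+
  then have "v = (\<chi> i. Max ((\<lambda>u. u$i + lam u) ` V))"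
    by (simp add: vec_eq_iff)
  then show ?thesis
    unfolding tspan_def by blast
qed

lemma continuous_on_Max_image:
  fixes f :: "'i \<Rightarrow> 'x::topological_space \<Rightarrow> real"
  assumes "finite I" "I \<noteq> {}" "\<And>i. i \<in> I \<Longrightarrow> continuous_on A (f i)"
  shows "continuous_on A (\<lambda>y. Max ((\<lambda>i. f i y) ` I))"
  using assms by (induction I rule: finite_ne_induct) (auto intro: continuous_on_max)

lemma continuous_on_fw_cost: "continuous_on A (fw_cost C)"
  unfolding fw_cost_def[abs_def] tdist_def
  by (intro continuous_intros continuous_on_Max_image) auto

lemma compact_fw_cost_sublevel:
  assumes "finite C" "C \<noteq> {}"
  shows "compact {y. y$k = 0 \<and> fw_cost C y \<le> M}"
proof -
  obtain s where s: "s \<in> C" using assms by blast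
  have coord_bound: "\<bar>y$j\<bar> \<le> M + \<bar>s$j - s$k\<bar>" if "y$k = 0" "fw_cost C y \<le> M" for y j
  proof -
    have "tdist s y \<le> fw_cost C y"
      unfolding fw_cost_def by (rule member_le_sum[OF s _ assms(1)]) (rule tdist_nonneg)
    then show ?thesis
      using that coord_diff_le_tdist[of s k y j] coord_diff_le_tdist[of s j y k] by linarith
  qed
  have "norm y \<le> (\<Sum>j\<in>UNIV. M + \<bar>s$j - s$k\<bar>)" if "y$k = 0" "fw_cost C y \<le> M" for y
  proof -
    have "norm y \<le> (\<Sum>j\<in>UNIV. \<bar>y$j\<bar>)"
      by (rule norm_le_l1_cart)
    also have "\<dots> \<le> (\<Sum>j\<in>UNIV. M + \<bar>s$j - s$k\<bar>)"
      by (rule sum_mono) (rule coord_bound[OF that])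
    finally show ?thesis .
  qed
  then have "bounded {y. y$k = 0 \<and> fw_cost C y \<le> M}"
    unfolding bounded_iff by blast
  moreover have "closed {y. y$k = 0 \<and> fw_cost C y \<le> M}"
    by (intro closed_Collect_conj closed_Collect_eq closed_Collect_le continuous_on_fw_cost
        continuous_intros)
  ultimately show ?thesis
    by (simp add: compact_eq_bounded_closed)
qed

lemma FW_slice_eq_sublevel:
  assumes "y0 \<in> FW C"
  shows "{y \<in> FW C. y$k = 0} = {y. y$k = 0 \<and> fw_cost C y \<le> fw_cost C y0}"
  using assms unfolding mem_FW_iff by (auto intro: order_trans)

lemma FW_nonempty:
  fixes C :: "(real^'n) set"
  assumes "finite C" "C \<noteq> {}"
  shows "FW C \<noteq> {}"
proof -
  obtain s where "s \<in> C" using assms by blast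
  obtain k :: 'n where True by blast
  define K where "K = {y. y$k = 0 \<and> fw_cost C y \<le> fw_cost C (s + vec (- s$k))}"
  have "compact K"
    unfolding K_def by (rule compact_fw_cost_sublevel[OF assms])
  moreover have "s + vec (- s$k) \<in> K"
    by (simp add: K_def)
  then have "K \<noteq> {}"
    by blast
  ultimately obtain m where m: "m \<in> K" "\<forall>y\<in>K. fw_cost C m \<le> fw_cost C y"
    using continuous_attains_inf continuous_on_fw_cost by metis
  have "fw_cost C m \<le> fw_cost C z" for z
  proof (cases "z + vec (- z$k) \<in> K")
    case True
    then show ?thesis
      using m(2) fw_cost_add_vec[of C z "- z$k"] by fastforce
  next
    case False
    then have "fw_cost C (s + vec (- s$k)) \<le> fw_cost C z"
      using fw_cost_add_vec[of C z "- z$k"] by (simp add: K_def)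
    then show ?thesis
      using m(1) by (simp add: K_def)
  qed
  then have "m \<in> FW C"
    unfolding mem_FW_iff by blast
  then show ?thesis
    by blast
qed

lemma FW_slice_has_least:
  assumes "finite C" "C \<noteq> {}"
  shows "\<exists>w\<in>FW C. w$k = 0 \<and> (\<forall>y\<in>FW C. y$k = 0 \<longrightarrow> w \<le> y)"
proof -
  obtain y0 where y0: "y0 \<in> FW C"
    using FW_nonempty[OF assms] by blast
  define K where "K = {y \<in> FW C. y$k = 0}"
  have "compact K"
    unfolding K_def FW_slice_eq_sublevel[OF y0] by (rule compact_fw_cost_sublevel[OF assms])
  moreover have "y0 + vec (- y0$k) \<in> K"
    using add_vec_mem_FW[OF y0, of "- y0$k"] by (simp add: K_def)
  ultimately have "\<exists>p\<in>K. \<forall>y\<in>K. p$j \<le> y$j" for j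
    by (intro continuous_attains_inf) (auto intro: continuous_intros)
  then obtain p where p: "\<And>j. p j \<in> K" "\<And>j y. y \<in> K \<Longrightarrow> p j $ j \<le> y$j"
    by metis
  have "Inf (range p) \<in> FW C"
    using p(1) by (intro Inf_mem_FW) (auto simp: K_def)
  moreover have "Inf (range p) $ k = 0"
    using p(1) by (auto simp: K_def Inf_vec_nth_finite intro!: Min_eqI) (metis image_eqI rangeI)
  moreover have "Inf (range p) \<le> y" if "y \<in> K" for y
  proof -
    have "Inf (range p) $ j \<le> p j $ j" for j
      by (auto simp: Inf_vec_nth_finite intro!: Min_le)
    then show ?thesis
      using p(2)[OF that] by (auto simp: less_eq_vec_def intro: order_trans)
  qed
  ultimately show ?thesis
    by (auto simp: K_def)
qed

text \<open>The least points \<open>W k\<close> of the slices \<open>{y \<in> FW C. y$k = 0}\<close> generate \<open>FW C\<close>: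
  each \<open>x \<in> FW C\<close> is their tropical combination with the coefficients \<open>x$k\<close>.\<close>

lemma mem_tspan_slice_least:
  fixes W :: "'n \<Rightarrow> real^'n"
  assumes W: "\<And>k. W k $ k = 0" "\<And>k y. y \<in> FW C \<Longrightarrow> y$k = 0 \<Longrightarrow> W k \<le> y"
    and x: "x \<in> FW C"
  shows "x \<in> tspan (range W)"
proof -
  define lam where "lam v = Max ((\<lambda>l. x$l) ` {l. W l = v})" for v
  have "v + vec (lam v) \<le> x" if "v \<in> range W" for v
  proof -
    have "lam v \<in> (\<lambda>l. x$l) ` {l. W l = v}"
      unfolding lam_def by (rule Max_in) (use that in auto)
    then obtain l where l: "W l = v" "lam v = x$l"
      by auto
    have "W l \<le> x + vec (- x$l)"
      using W(2)[OF add_vec_mem_FW[OF x]] by simp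
    then show ?thesis
      using l by (simp add: less_eq_vec_def le_diff_eq)
  qed
  then have "Sup ((\<lambda>v. v + vec (lam v)) ` range W) \<le> x"
    by (auto intro: cSup_least)
  moreover have "x$i \<le> Sup ((\<lambda>v. v + vec (lam v)) ` range W) $ i" for i
  proof -
    have "x$i \<le> lam (W i)"
      unfolding lam_def by (rule Max_ge) auto
    also have "\<dots> = (W i + vec (lam (W i))) $ i"
      using W(1) by simp
    also have "\<dots> \<le> Sup ((\<lambda>v. v + vec (lam v)) ` range W) $ i"
      using cSup_upper[of "W i + vec (lam (W i))" "(\<lambda>v. v + vec (lam v)) ` range W"]
      by (auto simp: less_eq_vec_def bdd_above_finite)
    finally show ?thesis .
  qed
  ultimately have "x = Sup ((\<lambda>v. v + vec (lam v)) ` range W)"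
    by (auto simp: less_eq_vec_def vec_eq_iff intro: antisym)
  then show ?thesis
    by (simp add: tspan_eq_range_Sup)
qed

lemma FW_finitely_generated:
  fixes C :: "(real^'n) set"
  assumes "finite C" "C \<noteq> {}"
  obtains W :: "'n \<Rightarrow> real^'n" where "tspan (range W) = FW C"
proof -
  obtain W where W: "\<And>k. W k \<in> FW C" "\<And>k. W k $ k = 0"
    "\<And>k y. y \<in> FW C \<Longrightarrow> y$k = 0 \<Longrightarrow> W k \<le> y"
    using FW_slice_has_least[OF assms] by metis
  have "FW C \<subseteq> tspan (range W)"
    using W(2,3) by (auto intro: mem_tspan_slice_least)
  moreover have "tspan (range W) \<subseteq> FW C"
    using W(1) by (intro tspan_subset_FW) auto
  ultimately show thesis
    using that by blast
qed

lemma tvertices_exist: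
  fixes C :: "(real^'n) set"
  assumes "finite C" "C \<noteq> {}"
  obtains V where "tvertices C V"
proof -
  define P where "P V \<longleftrightarrow> finite V \<and> tspan V = FW C" for V
  obtain W :: "'n \<Rightarrow> real^'n" where "tspan (range W) = FW C"
    using FW_finitely_generated[OF assms] .
  then obtain V where V: "P V" "\<And>V'. P V' \<Longrightarrow> card V \<le> card V'"
    using ex_has_least_nat[of P "range W" card] by (auto simp: P_def)
  have "V \<noteq> {}"
  proof
    assume "V = {}"
    then have FW_sub: "FW C \<subseteq> {\<chi> i. Max {}}"
      using V(1) by (auto simp: P_def tspan_def)
    obtain y where "y \<in> FW C"
      using FW_nonempty[OF assms] by blast
    then have "y + vec 1 = y"
      using FW_sub add_vec_mem_FW[of y C 1] by blast
    then show False
      by (simp add: vec_eq_iff)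
  qed
  moreover have "tspan V' \<noteq> FW C" if "V' \<subset> V" for V'
    using V that psubset_card_mono[of V V'] finite_subset[of V' V] by (force simp: P_def)
  ultimately show thesis
    using that V(1) by (auto simp: tvertices_def P_def)
qed

lemma tmedian_mem_FW:
  assumes "finite C" "C \<noteq> {}"
  shows "tmedian C \<in> FW C"
proof -
  obtain V where V: "tvertices C V" "tmedian C = (1 / real (card V)) *\<^sub>R (\<Sum>v\<in>V. v)"
    using someI_ex[of "\<lambda>m. \<exists>V. tvertices C V \<and> m = (1 / real (card V)) *\<^sub>R (\<Sum>v\<in>V. v)"]
      tvertices_exist[OF assms] unfolding tmedian_def by blast
  then have "finite V" "V \<noteq> {}" "V \<subseteq> FW C"
    using mem_tspan unfolding tvertices_def by blast+
  then have "(\<Sum>v\<in>V. (1 / real (card V)) *\<^sub>R v) \<in> FW C"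
    by (intro convex_sum convex_FW) auto
  then show ?thesis
    by (simp add: V(2) scaleR_sum_right)
qed

lemma fw_cost_tmedian_le: "finite C \<Longrightarrow> C \<noteq> {} \<Longrightarrow> fw_cost C (tmedian C) \<le> fw_cost C z"
  using tmedian_mem_FW mem_FW_iff by blast

section \<open>Lloyd's iteration\<close>

definition assignment_cost :: "(real^'n) set \<Rightarrow> (real^'n \<Rightarrow> nat) \<Rightarrow> (nat \<Rightarrow> real^'n) \<Rightarrow> real" where
  "assignment_cost S a c = (\<Sum>s\<in>S. tdist s (c (a s)))"

lemma assignment_cost_eq_sum_clusters:
  assumes "finite S" "\<forall>s\<in>S. a s < k"
  shows "assignment_cost S a c = (\<Sum>j<k. fw_cost (cluster S a j) (c j))"
proof -
  have "assignment_cost S a c = (\<Sum>j<k. \<Sum>s\<in>cluster S a j. tdist s (c (a s)))"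
    unfolding assignment_cost_def cluster_def by (rule sum.group[symmetric]) (use assms in auto)
  also have "\<dots> = (\<Sum>j<k. fw_cost (cluster S a j) (c j))"
    unfolding fw_cost_def by (intro sum.cong) (auto simp: cluster_def)
  finally show ?thesis .
qed

lemma fw_cost_tmedian_cluster_le:
  assumes "finite S"
  shows "fw_cost (cluster S a j) (tmedian (cluster S a j)) \<le> fw_cost (cluster S a j) z"
proof (cases "cluster S a j = {}")
  case False
  have "finite (cluster S a j)"
    using assms by (simp add: cluster_def)
  then show ?thesis
    using False by (rule fw_cost_tmedian_le)
qed (simp add: fw_cost_def)

lemma kloss_le_assignment_cost:
  assumes "finite S" "\<forall>s\<in>S. a s < k"
  shows "kloss S k a \<le> assignment_cost S a c"
  unfolding assignment_cost_eq_sum_clusters[OF assms] kloss_def fw_cost_def[symmetric]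
  by (intro sum_mono fw_cost_tmedian_cluster_le[OF assms(1)])

lemma assignment_cost_mstep_le:
  assumes "finite S" "\<forall>s\<in>S. a s < k"
  shows "assignment_cost S a (mstep S c a) \<le> assignment_cost S a c"
  unfolding assignment_cost_eq_sum_clusters[OF assms]
  by (intro sum_mono) (simp add: mstep_def fw_cost_tmedian_cluster_le[OF assms(1)])

lemma assignment_cost_valid_assign_le:
  assumes "valid_assign S k c a'" "\<forall>s\<in>S. a s < k"
  shows "assignment_cost S a' c \<le> assignment_cost S a c"
  unfolding assignment_cost_def by (rule sum_mono) (use assms in \<open>auto simp: valid_assign_def\<close>)

lemma assignment_cost_valid_assign:
  assumes "valid_assign S k c a"
  shows "assignment_cost S a c = (\<Sum>s\<in>S. Min ((\<lambda>i. tdist s (c i)) ` {..<k}))"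
  unfolding assignment_cost_def
proof (rule sum.cong)
  fix s assume "s \<in> S"
  then have "a s < k" "\<forall>i<k. tdist s (c (a s)) \<le> tdist s (c i)"
    using assms by (auto simp: valid_assign_def)
  then show "tdist s (c (a s)) = Min ((\<lambda>i. tdist s (c i)) ` {..<k})"
    by (intro Min_eqI[symmetric]) auto
qed simp

lemma kmeans_output_kloss_le:
  assumes "finite S" "kmeans_output S k c0 a"
  shows "kloss S k a \<le> (\<Sum>s\<in>S. Min ((\<lambda>i. tdist s (c0 i)) ` {..<k}))"
proof -
  obtain m cs as where m: "cs 0 = c0" "\<forall>t\<le>m. valid_assign S k (cs t) (as t)"
    "\<forall>t<m. cs (Suc t) = mstep S (cs t) (as t)" "a = as m"
    using assms(2) unfolding kmeans_output_def by blast
  have as_lt: "\<forall>s\<in>S. as t s < k" if "t \<le> m" for t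
    using m(2) that by (auto simp: valid_assign_def)
  have "assignment_cost S (as t) (cs t) \<le> assignment_cost S (as 0) (cs 0)" if "t \<le> m" for t
    using that
  proof (induction t)
    case (Suc t)
    have "assignment_cost S (as (Suc t)) (cs (Suc t)) \<le> assignment_cost S (as t) (cs (Suc t))"
      using Suc.prems m(2) as_lt by (intro assignment_cost_valid_assign_le) auto
    also have "\<dots> \<le> assignment_cost S (as t) (cs t)"
      using Suc.prems m(3) assignment_cost_mstep_le[OF assms(1) as_lt] by simp
    finally show ?case
      using Suc by simp
  qed simp
  then have "kloss S k a \<le> assignment_cost S (as 0) (cs 0)"
    using kloss_le_assignment_cost[OF assms(1) as_lt] m(4) by (meson order.refl order_trans)
  also have "\<dots> = (\<Sum>s\<in>S. Min ((\<lambda>i. tdist s (c0 i)) ` {..<k}))"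
    using m(1) m(2)[rule_format, of 0] by (simp add: assignment_cost_valid_assign)
  finally show ?thesis .
qed

section \<open>The k-means++ seeding\<close>

lemma expectation_bind_pmf_finite:
  fixes f :: "'b \<Rightarrow> real"
  assumes "finite (set_pmf M)" "\<And>x. x \<in> set_pmf M \<Longrightarrow> finite (set_pmf (N x))"
  shows "measure_pmf.expectation (bind_pmf M N) f
    = measure_pmf.expectation M (\<lambda>x. measure_pmf.expectation (N x) f)"
proof -
  define B where "B = (\<Union>x\<in>set_pmf M. set_pmf (N x))"
  have B: "finite B"
    using assms by (simp add: B_def)
  have N_eq: "measure_pmf.expectation (N x) f = (\<Sum>y\<in>B. f y * pmf (N x) y)" if "x \<in> set_pmf M" for x
    by (rule integral_measure_pmf_real[OF B]) (use that in \<open>auto simp: B_def\<close>)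
  have "measure_pmf.expectation (bind_pmf M N) f = (\<Sum>y\<in>B. f y * pmf (bind_pmf M N) y)"
    by (rule integral_measure_pmf_real[OF B]) (auto simp: B_def set_bind_pmf)
  also have "\<dots> = (\<Sum>y\<in>B. \<Sum>x\<in>set_pmf M. f y * pmf (N x) y * pmf M x)"
    by (simp add: pmf_bind integral_measure_pmf_real[OF assms(1)] sum_distrib_left mult.assoc)
  also have "\<dots> = (\<Sum>x\<in>set_pmf M. measure_pmf.expectation (N x) f * pmf M x)"
    by (subst sum.swap) (simp add: N_eq sum_distrib_right)
  also have "\<dots> = measure_pmf.expectation M (\<lambda>x. measure_pmf.expectation (N x) f)"
    by (rule integral_measure_pmf_real[OF assms(1), symmetric]) auto
  finally show ?thesis .
qed

lemma expectation_mono_finite_pmf: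
  fixes f g :: "'b \<Rightarrow> real"
  assumes "finite (set_pmf M)" "\<And>x. x \<in> set_pmf M \<Longrightarrow> f x \<le> g x"
  shows "measure_pmf.expectation M f \<le> measure_pmf.expectation M g"
  using assms
  by (intro integral_mono_AE) (auto simp: integrable_measure_pmf_finite AE_measure_pmf_iff)

text \<open>The case \<open>L = 0\<close> is covered by the convention \<open>x / 0 = 0\<close>.\<close>

lemma expectation_divide_le:
  fixes f g :: "'a \<Rightarrow> real"
  assumes "finite (set_pmf M)" "\<And>x. x \<in> set_pmf M \<Longrightarrow> f x \<le> g x"
    and "measure_pmf.expectation M g \<le> B * L" "0 \<le> L" "0 \<le> B"
  shows "measure_pmf.expectation M (\<lambda>x. f x / L) \<le> B"
proof (cases "L = 0")
  case False
  then have "measure_pmf.expectation M (\<lambda>x. f x / L) \<le> measure_pmf.expectation M (\<lambda>x. g x / L)"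
    using assms by (intro expectation_mono_finite_pmf divide_right_mono) auto
  also have "\<dots> \<le> B"
    using assms(3,4) False by (simp add: divide_le_eq mult.commute)
  finally show ?thesis .
qed (simp add: assms(5))

lemma Dmin_nonneg: "cs \<noteq> [] \<Longrightarrow> 0 \<le> Dmin cs s"
  unfolding Dmin_def by (subst Min_ge_iff) (auto simp: tdist_nonneg)

lemma Dmin_snoc: "cs \<noteq> [] \<Longrightarrow> Dmin (cs @ [x]) s = min (Dmin cs s) (tdist s x)"
  unfolding Dmin_def by (simp add: min.commute)

lemma Dmin_eq_Min_nth: "length cs = k \<Longrightarrow> Dmin cs s = Min ((\<lambda>i. tdist s (cs ! i)) ` {..<k})"
  unfolding Dmin_def by (metis image_image list.set_map map_nth set_upt atLeast_upt)

lemma Dmin_le_tdist_add_Dmin: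
  assumes "cs \<noteq> []"
  shows "Dmin cs a \<le> tdist a b + Dmin cs b"
proof -
  have "Dmin cs b \<in> (\<lambda>c. tdist b c) ` set cs"
    unfolding Dmin_def by (rule Min_in) (use assms in auto)
  then obtain c where c: "c \<in> set cs" "Dmin cs b = tdist b c"
    by auto
  have "Dmin cs a \<le> tdist a c"
    unfolding Dmin_def by (rule Min_le) (use c in auto)
  also have "\<dots> \<le> tdist a b + tdist b c"
    by (rule tdist_triangle)
  finally show ?thesis
    using c by simp
qed

definition potential :: "(real^'n) list \<Rightarrow> (real^'n) set \<Rightarrow> real" where
  "potential cs X = (\<Sum>s\<in>X. Dmin cs s)"

lemma potential_nonneg: "cs \<noteq> [] \<Longrightarrow> 0 \<le> potential cs X"
  unfolding potential_def by (rule sum_nonneg) (simp add: Dmin_nonneg)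

lemma potential_snoc_le: "cs \<noteq> [] \<Longrightarrow> potential (cs @ [x]) X \<le> potential cs X"
  unfolding potential_def by (rule sum_mono) (simp add: Dmin_snoc)

lemma potential_snoc_le_fw_cost: "cs \<noteq> [] \<Longrightarrow> potential (cs @ [x]) X \<le> fw_cost X x"
  unfolding potential_def fw_cost_def by (rule sum_mono) (simp add: Dmin_snoc)

lemma potential_singleton: "potential [x] X = fw_cost X x"
  by (simp add: potential_def fw_cost_def Dmin_def)

lemma pmf_kpp_next:
  assumes "finite S" "cs \<noteq> []" "potential cs S \<noteq> 0"
  shows "pmf (kpp_next S cs) s = (if s \<in> S then Dmin cs s / potential cs S else 0)"
proof -
  define f where "f s = (if s \<in> S then Dmin cs s / potential cs S else 0)" for s
  have f_nonneg: "0 \<le> f s" for s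
    using assms by (auto simp: f_def intro!: divide_nonneg_nonneg Dmin_nonneg potential_nonneg)
  have "(\<Sum>s\<in>S. f s) = 1"
    using assms(3) by (simp add: f_def potential_def sum_divide_distrib[symmetric])
  moreover have "(\<integral>\<^sup>+s. ennreal (f s) \<partial>count_space UNIV) = (\<integral>\<^sup>+s. ennreal (f s) \<partial>count_space S)"
    by (subst nn_integral_count_space_indicator)
      (auto simp: f_def split: split_indicator intro!: nn_integral_cong)
  moreover have "(\<integral>\<^sup>+s. ennreal (f s) \<partial>count_space S) = (\<Sum>s\<in>S. ennreal (f s))"
    by (rule nn_integral_count_space_finite[OF assms(1)])
  ultimately have prob: "(\<integral>\<^sup>+s. ennreal (f s) \<partial>count_space UNIV) = 1"
    using f_nonneg by simp
  have "kpp_next S cs = embed_pmf f"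
    using assms unfolding kpp_next_def f_def potential_def by simp
  then show ?thesis
    by (simp add: pmf_embed_pmf[OF f_nonneg prob]) (simp add: f_def)
qed

lemma set_pmf_kpp_next_subset:
  assumes "finite S" "S \<noteq> {}"
  shows "set_pmf (kpp_next S cs) \<subseteq> S"
proof (cases "cs = [] \<or> potential cs S = 0")
  case True
  then show ?thesis
    using assms by (auto simp: kpp_next_def potential_def)
next
  case False
  then show ?thesis
    using pmf_kpp_next[OF assms(1)] by (auto simp: set_pmf_iff split: if_splits)
qed

lemma expectation_kpp_next:
  assumes "finite S" "cs \<noteq> []" "potential cs S \<noteq> 0"
  shows "measure_pmf.expectation (kpp_next S cs) h = (\<Sum>s\<in>S. Dmin cs s / potential cs S * h s)"
proof -
  have "S \<noteq> {}"
    using assms(3) by (auto simp: potential_def)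
  then have "measure_pmf.expectation (kpp_next S cs) h = (\<Sum>s\<in>S. h s * pmf (kpp_next S cs) s)"
    using set_pmf_kpp_next_subset[OF assms(1)] by (intro integral_measure_pmf_real[OF assms(1)]) auto
  then show ?thesis
    by (simp add: pmf_kpp_next[OF assms] mult.commute)
qed

text \<open>\<open>kpp_seeds\<close> unfolds the last sampling step; the analysis needs the first one unfolded.\<close>

fun kpp_extend :: "(real^'n) set \<Rightarrow> nat \<Rightarrow> (real^'n) list \<Rightarrow> (real^'n) list pmf" where
  "kpp_extend S 0 cs = return_pmf cs"
| "kpp_extend S (Suc t) cs = bind_pmf (kpp_next S cs) (\<lambda>x. kpp_extend S t (cs @ [x]))"

lemma kpp_extend_Suc_last:
  "kpp_extend S (Suc t) cs = bind_pmf (kpp_extend S t cs) (\<lambda>l. map_pmf (\<lambda>x. l @ [x]) (kpp_next S l))"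
proof (induction t arbitrary: cs)
  case (Suc t)
  have "kpp_extend S (Suc (Suc t)) cs = bind_pmf (kpp_next S cs) (\<lambda>x. kpp_extend S (Suc t) (cs @ [x]))"
    by simp
  also have "\<dots> = bind_pmf (kpp_next S cs) (\<lambda>x. bind_pmf (kpp_extend S t (cs @ [x]))
      (\<lambda>l. map_pmf (\<lambda>y. l @ [y]) (kpp_next S l)))"
    by (simp only: Suc.IH)
  finally show ?case
    by (simp add: bind_assoc_pmf)
qed (simp add: map_pmf_def bind_return_pmf)

lemma kpp_seeds_eq_kpp_extend: "kpp_seeds S t = kpp_extend S t []"
  by (induction t) (simp, simp del: kpp_extend.simps add: kpp_extend_Suc_last)

lemma finite_set_pmf_kpp_extend:
  assumes "finite S" "S \<noteq> {}"
  shows "finite (set_pmf (kpp_extend S t cs))"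
proof (induction t arbitrary: cs)
  case (Suc t)
  have "finite (set_pmf (kpp_next S cs))"
    using set_pmf_kpp_next_subset[OF assms] assms(1) by (rule finite_subset)
  then show ?case
    using Suc.IH by (simp add: set_bind_pmf)
qed simp

lemma length_kpp_extend: "l \<in> set_pmf (kpp_extend S t cs) \<Longrightarrow> length l = length cs + t"
proof (induction t arbitrary: cs)
  case (Suc t)
  then obtain x where "l \<in> set_pmf (kpp_extend S t (cs @ [x]))"
    by (auto simp: set_bind_pmf)
  then show ?case
    using Suc.IH by fastforce
qed simp

lemma finite_set_pmf_kpp_seeds: "finite S \<Longrightarrow> S \<noteq> {} \<Longrightarrow> finite (set_pmf (kpp_seeds S k))"
  by (simp add: kpp_seeds_eq_kpp_extend finite_set_pmf_kpp_extend)

lemma length_kpp_seeds: "cs \<in> set_pmf (kpp_seeds S k) \<Longrightarrow> length cs = k"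
  using length_kpp_extend[of cs S k "[]"] by (simp add: kpp_seeds_eq_kpp_extend)

definition expected_potential :: "(real^'n) set \<Rightarrow> nat \<Rightarrow> (real^'n) list \<Rightarrow> real" where
  "expected_potential S t cs = measure_pmf.expectation (kpp_extend S t cs) (\<lambda>l. potential l S)"

lemma expected_potential_0: "expected_potential S 0 cs = potential cs S"
  by (simp add: expected_potential_def)

lemma expected_potential_Suc:
  assumes "finite S" "S \<noteq> {}"
  shows "expected_potential S (Suc t) cs
    = measure_pmf.expectation (kpp_next S cs) (\<lambda>x. expected_potential S t (cs @ [x]))"
  unfolding expected_potential_def kpp_extend.simps
  using set_pmf_kpp_next_subset[OF assms] assms(1)
  by (intro expectation_bind_pmf_finite finite_set_pmf_kpp_extend[OF assms]) (rule finite_subset)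

lemma expected_potential_le_potential:
  assumes "finite S" "S \<noteq> {}" "cs \<noteq> []"
  shows "expected_potential S t cs \<le> potential cs S"
  using assms(3)
proof (induction t arbitrary: cs)
  case (Suc t)
  have "expected_potential S t (cs @ [x]) \<le> potential cs S" for x
    using Suc.IH[of "cs @ [x]"] potential_snoc_le[OF Suc.prems, of x S] by simp
  then have "expected_potential S (Suc t) cs \<le> measure_pmf.expectation (kpp_next S cs) (\<lambda>x. potential cs S)"
    unfolding expected_potential_Suc[OF assms(1,2)]
    using set_pmf_kpp_next_subset[OF assms(1,2)] assms(1)
    by (intro expectation_mono_finite_pmf) (auto intro: finite_subset)
  then show ?case
    by simp
qed (simp add: expected_potential_0)

text \<open>Arthur and Vassilvitskii's Lemma 3.1, with the constant \<open>n\<close>: a centre drawn uniformly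
  from a cluster \<open>A\<close> costs in expectation at most \<open>n\<close> times the optimum of \<open>A\<close>.\<close>

lemma sum_fw_cost_le:
  fixes y :: "real^'n"
  assumes "finite A"
  shows "(\<Sum>a\<in>A. fw_cost A a) \<le> real CARD('n) * real (card A) * fw_cost A y"
proof -
  have "(\<Sum>a\<in>A. fw_cost A a) \<le> (\<Sum>a\<in>A. \<Sum>s\<in>A. tdist s y + tdist y a)"
    unfolding fw_cost_def by (intro sum_mono tdist_triangle)
  also have "\<dots> = real (card A) * fw_cost A y + real (card A) * (\<Sum>a\<in>A. tdist y a)"
    by (simp add: fw_cost_def sum.distrib sum_distrib_left)
  also have "\<dots> \<le> real (card A) * fw_cost A y + real (card A) * ((real CARD('n) - 1) * fw_cost A y)"
    unfolding fw_cost_def sum_distrib_left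
    by (intro add_left_mono mult_left_mono sum_mono tdist_commute_le) simp
  also have "\<dots> = real CARD('n) * real (card A) * fw_cost A y"
    by (simp add: algebra_simps)
  finally show ?thesis .
qed

lemma sum_sum_tdist_add_commute_le:
  fixes y :: "real^'n"
  shows "(\<Sum>a\<in>A. \<Sum>s\<in>A. tdist a s + tdist s a) \<le> 2 * real (card A) * real CARD('n) * fw_cost A y"
proof -
  define e where "e x = tdist x y + tdist y x" for x
  have "tdist a s + tdist s a \<le> e a + e s" for a s
    using tdist_triangle[of a s y] tdist_triangle[of s a y] unfolding e_def by linarith
  then have "(\<Sum>a\<in>A. \<Sum>s\<in>A. tdist a s + tdist s a) \<le> (\<Sum>a\<in>A. \<Sum>s\<in>A. e a + e s)"
    by (intro sum_mono)
  also have "\<dots> = 2 * real (card A) * (\<Sum>x\<in>A. e x)"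
    by (simp add: sum.distrib sum_distrib_left[symmetric])
  also have "\<dots> \<le> 2 * real (card A) * (\<Sum>x\<in>A. real CARD('n) * tdist x y)"
    unfolding e_def by (intro mult_left_mono sum_mono tdist_add_commute_le) auto
  finally show ?thesis
    by (simp add: fw_cost_def sum_distrib_left mult.assoc)
qed

text \<open>Arthur and Vassilvitskii's Lemma 3.2, with \<open>2 n\<close> in place of \<open>8\<close>: a centre drawn from
  \<open>A\<close> with probability proportional to \<open>Dmin cs\<close> leaves an expected potential on \<open>A\<close> of at most
  \<open>2 n\<close> times the optimum of \<open>A\<close>.\<close>

lemma sum_Dmin_mult_potential_snoc_le:
  fixes y :: "real^'n"
  assumes "finite A" "cs \<noteq> []"
  shows "(\<Sum>a\<in>A. Dmin cs a * potential (cs @ [a]) A) \<le> 2 * real CARD('n) * potential cs A * fw_cost A y"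
proof (cases "A = {}")
  case False
  define N where "N = real (card A)"
  define P where "P = potential cs A"
  have N: "N > 0"
    using False assms(1) by (simp add: N_def card_gt_0_iff)
  have P: "P \<ge> 0"
    unfolding P_def by (rule potential_nonneg[OF assms(2)])
  have "N * (Dmin cs a * potential (cs @ [a]) A) \<le> P * (\<Sum>s\<in>A. tdist a s + tdist s a)" for a
  proof -
    have "N * Dmin cs a = (\<Sum>s\<in>A. Dmin cs a)"
      by (simp add: N_def)
    also have "\<dots> \<le> (\<Sum>s\<in>A. tdist a s + Dmin cs s)"
      by (intro sum_mono Dmin_le_tdist_add_Dmin[OF assms(2)])
    also have "\<dots> = (\<Sum>s\<in>A. tdist a s) + P"
      by (simp add: sum.distrib P_def potential_def)
    finally have "N * Dmin cs a * potential (cs @ [a]) A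
        \<le> ((\<Sum>s\<in>A. tdist a s) + P) * potential (cs @ [a]) A"
      by (intro mult_right_mono potential_nonneg) auto
    also have "\<dots> \<le> (\<Sum>s\<in>A. tdist a s) * P + P * fw_cost A a"
      using potential_snoc_le[OF assms(2), of a A] potential_snoc_le_fw_cost[OF assms(2), of a A] P
      by (simp add: distrib_right add_mono mult_left_mono sum_nonneg tdist_nonneg P_def)
    finally show ?thesis
      by (simp add: fw_cost_def sum.distrib algebra_simps)
  qed
  then have by_Dmin: "N * (\<Sum>a\<in>A. Dmin cs a * potential (cs @ [a]) A)
      \<le> P * (\<Sum>a\<in>A. \<Sum>s\<in>A. tdist a s + tdist s a)"
    by (simp add: sum_distrib_left sum_mono)
  from mult_left_mono[OF sum_sum_tdist_add_commute_le[of A y, folded N_def] P] by_Dmin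
  have "N * (\<Sum>a\<in>A. Dmin cs a * potential (cs @ [a]) A) \<le> N * (2 * real CARD('n) * P * fw_cost A y)"
    by (simp add: algebra_simps)
  then show ?thesis
    using N by (simp add: P_def)
qed (simp add: fw_cost_def potential_def)

text \<open>The arithmetic of the induction step of Arthur and Vassilvitskii's Lemma 3.3:
  \<open>pc\<close> and \<open>pu\<close> are the potentials of the covered and uncovered sites, \<open>u\<close> the number of
  uncovered clusters and \<open>sq\<close> the sum of squares of their potentials, so \<open>pu\<^sup>2 \<le> u sq\<close>.\<close>

lemma seeding_step_arith:
  fixes pc pu phi opt H u t E sq :: real
  assumes phi: "phi = pc + pu" "phi > 0" and nonneg: "pc \<ge> 0" "pu \<ge> 0" "opt \<ge> 0" "t \<ge> 0"
    and u: "u \<ge> t + 1" and sq: "pu\<^sup>2 \<le> u * sq"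
    and E: "E \<le> (pc * ((pc + opt) * H + ((u - t) / u) * pu)
                + ((pc + opt) * H * pu + ((u - 1 - t) / (u - 1)) * (pu * pu - sq))) / phi"
  shows "E \<le> (pc + opt) * (H + 1 / (t + 1)) + ((u - (t + 1)) / u) * pu"
proof -
  have u0: "u > 0"
    using u nonneg by linarith
  have "((u - 1 - t) / (u - 1)) * (pu * pu - sq) \<le> ((u - 1 - t) / u) * (pu * pu)"
  proof (cases "u = 1")
    case False
    then have u1: "u - 1 > 0"
      using u nonneg by linarith
    have "pu * pu - sq \<le> pu * pu - pu * pu / u"
      using sq u0 by (simp add: power2_eq_square field_simps)
    also have "\<dots> = (pu * pu) * (u - 1) / u"
      using u0 by (simp add: field_simps)
    finally have "pu * pu - sq \<le> (pu * pu) * (u - 1) / u" .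
    then have "((u - 1 - t) / (u - 1)) * (pu * pu - sq) \<le> ((u - 1 - t) / (u - 1)) * ((pu * pu) * (u - 1) / u)"
      using u1 u by (intro mult_left_mono) auto
    also have "\<dots> = ((u - 1 - t) / u) * (pu * pu)"
      using u1 u0 by (simp add: field_simps)
    finally show ?thesis .
  qed (use nonneg u in simp)
  then have "E \<le> (pc * ((pc + opt) * H + ((u - t) / u) * pu)
      + ((pc + opt) * H * pu + ((u - 1 - t) / u) * (pu * pu))) / phi"
    using E phi(2) by (smt (verit) divide_right_mono)
  also have "\<dots> = (pc + opt) * H + ((u - 1 - t) / u) * pu + (pc * pu) / (u * phi)"
    using phi(2) u0 by (simp add: field_simps) (simp add: phi(1) algebra_simps)
  also have "(pc * pu) / (u * phi) \<le> (pc * phi) / (u * phi)"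
    using phi nonneg u0 by (intro divide_right_mono mult_left_mono) auto
  also have "\<dots> = pc / u"
    using phi(2) by simp
  also have "pc / u \<le> (pc + opt) / (t + 1)"
    using nonneg u by (intro frac_le) auto
  finally show ?thesis
    using nonneg by (simp add: field_simps)
qed

context
  fixes S :: "(real^'n) set" and g :: "real^'n \<Rightarrow> nat" and c :: "nat \<Rightarrow> real^'n"
  assumes finite_S: "finite S" and S_nonempty: "S \<noteq> {}"
begin

text \<open>\<open>g\<close> assigns the sites to the centres \<open>c\<close> of a reference clustering, eventually an
  optimal one. As in Arthur and Vassilvitskii's Lemma 3.3, \<open>Xu U\<close> collects the sites of the
  still uncovered clusters \<open>j \<in> U\<close> and \<open>Xc U\<close> the remaining, covered, ones.\<close>

definition Xu :: "nat set \<Rightarrow> (real^'n) set" where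
  "Xu U = {s \<in> S. g s \<in> U}"

definition Xc :: "nat set \<Rightarrow> (real^'n) set" where
  "Xc U = S - Xu U"

definition opt_cost :: "(real^'n) set \<Rightarrow> real" where
  "opt_cost X = (\<Sum>s\<in>X. tdist s (c (g s)))"

definition seeding_bound :: "nat \<Rightarrow> (real^'n) list \<Rightarrow> nat set \<Rightarrow> real" where
  "seeding_bound t cs U =
     (potential cs (Xc U) + 2 * real CARD('n) * opt_cost (Xu U)) * (1 + harm t)
     + (real (card U) - real t) / real (card U) * potential cs (Xu U)"

lemma opt_cost_nonneg: "0 \<le> opt_cost X"
  unfolding opt_cost_def by (rule sum_nonneg) (rule tdist_nonneg)

lemma opt_cost_cluster: "opt_cost (cluster S g j) = fw_cost (cluster S g j) (c j)"
  unfolding opt_cost_def fw_cost_def by (rule sum.cong) (auto simp: cluster_def)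

lemma sum_Xc_add_sum_Xu: "(\<Sum>s\<in>Xc U. h s) + (\<Sum>s\<in>Xu U. h s) = (\<Sum>s\<in>S. h s)"
  unfolding Xc_def by (rule sum.subset_diff[symmetric]) (auto simp: Xu_def finite_S)

lemma sum_Xu_eq_sum_clusters:
  assumes "finite U"
  shows "(\<Sum>s\<in>Xu U. h s) = (\<Sum>j\<in>U. \<Sum>s\<in>cluster S g j. h s)"
proof -
  have "(\<Sum>j\<in>U. \<Sum>s\<in>{x \<in> Xu U. g x = j}. h s) = (\<Sum>s\<in>Xu U. h s)"
    by (rule sum.group) (auto simp: Xu_def finite_S assms)
  moreover have "{x \<in> Xu U. g x = j} = cluster S g j" if "j \<in> U" for j
    using that by (auto simp: Xu_def cluster_def)
  ultimately show ?thesis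
    by simp
qed

lemma Xu_Diff_singleton: "j \<in> U \<Longrightarrow> Xu (U - {j}) = Xu U - cluster S g j"
  by (auto simp: Xu_def cluster_def)

lemma Xc_Diff_singleton: "j \<in> U \<Longrightarrow> Xc (U - {j}) = Xc U \<union> cluster S g j"
  by (auto simp: Xc_def Xu_def cluster_def)

lemma sum_Xu_Diff_cluster:
  fixes h :: "real^'n \<Rightarrow> real"
  shows "j \<in> U \<Longrightarrow> (\<Sum>s\<in>Xu U - cluster S g j. h s) = (\<Sum>s\<in>Xu U. h s) - (\<Sum>s\<in>cluster S g j. h s)"
  by (rule sum_diff) (auto simp: Xu_def cluster_def finite_S)

lemma sum_Xc_Un_cluster:
  "j \<in> U \<Longrightarrow> (\<Sum>s\<in>Xc U \<union> cluster S g j. h s) = (\<Sum>s\<in>Xc U. h s) + (\<Sum>s\<in>cluster S g j. h s)"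
  by (rule sum.union_disjoint) (auto simp: Xc_def Xu_def cluster_def finite_S)

lemma seeding_bound_nonneg:
  "cs \<noteq> [] \<Longrightarrow> t \<le> card U \<Longrightarrow> 0 \<le> seeding_bound t cs U"
  unfolding seeding_bound_def
  by (intro add_nonneg_nonneg mult_nonneg_nonneg divide_nonneg_nonneg potential_nonneg
      opt_cost_nonneg harm_nonneg) auto

lemma seeding_bound_snoc_le:
  "cs \<noteq> [] \<Longrightarrow> t \<le> card U \<Longrightarrow> seeding_bound t (cs @ [x]) U \<le> seeding_bound t cs U"
  unfolding seeding_bound_def
  by (intro add_mono mult_left_mono mult_right_mono potential_snoc_le add_nonneg_nonneg
      divide_nonneg_nonneg harm_nonneg) auto

text \<open>Removing the cluster \<open>j\<close> of a newly chosen centre \<open>x\<close> from \<open>U\<close> moves its sites,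
  with their new potential, to the covered part.\<close>

lemma seeding_bound_Diff_cluster_le:
  assumes "cs \<noteq> []" "finite U" "j \<in> U" "t < card U"
  shows "seeding_bound t (cs @ [x]) (U - {j})
    \<le> (potential cs (Xc U) + 2 * real CARD('n) * (opt_cost (Xu U) - opt_cost (cluster S g j))) * (1 + harm t)
      + (real (card U) - 1 - real t) / (real (card U) - 1) * (potential cs (Xu U) - potential cs (cluster S g j))
      + (1 + harm t) * potential (cs @ [x]) (cluster S g j)"
proof -
  define q where "q = (real (card U) - 1 - real t) / (real (card U) - 1)"
  have "real (card (U - {j})) = real (card U) - 1"
    using assms by (simp add: of_nat_diff)
  moreover have "potential (cs @ [x]) (Xc (U - {j}))
      = potential (cs @ [x]) (Xc U) + potential (cs @ [x]) (cluster S g j)"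
    using assms(3) by (simp add: Xc_Diff_singleton potential_def sum_Xc_Un_cluster)
  moreover have "opt_cost (Xu (U - {j})) = opt_cost (Xu U) - opt_cost (cluster S g j)"
    using assms(3) by (simp add: Xu_Diff_singleton opt_cost_def sum_Xu_Diff_cluster)
  ultimately have "seeding_bound t (cs @ [x]) (U - {j})
    = (potential (cs @ [x]) (Xc U) + potential (cs @ [x]) (cluster S g j)
        + 2 * real CARD('n) * (opt_cost (Xu U) - opt_cost (cluster S g j))) * (1 + harm t)
      + q * potential (cs @ [x]) (Xu (U - {j}))"
    by (simp add: seeding_bound_def q_def)
  also have "\<dots> \<le> (potential cs (Xc U) + potential (cs @ [x]) (cluster S g j)
        + 2 * real CARD('n) * (opt_cost (Xu U) - opt_cost (cluster S g j))) * (1 + harm t)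
      + q * (potential cs (Xu U) - potential cs (cluster S g j))"
  proof (intro order.refl add_mono mult_right_mono mult_left_mono)
    show "potential (cs @ [x]) (Xc U) \<le> potential cs (Xc U)"
      by (rule potential_snoc_le[OF assms(1)])
    have "potential (cs @ [x]) (Xu U - cluster S g j) \<le> potential cs (Xu U - cluster S g j)"
      by (rule potential_snoc_le[OF assms(1)])
    then show "potential (cs @ [x]) (Xu (U - {j})) \<le> potential cs (Xu U) - potential cs (cluster S g j)"
      using assms(3) by (simp add: Xu_Diff_singleton potential_def sum_Xu_Diff_cluster)
    show "0 \<le> q"
      using assms(4) by (auto simp: q_def intro!: divide_nonneg_nonneg)
    show "(0::real) \<le> 1 + harm t"
      using harm_nonneg[where 'a=real, of t] by linarith
  qed
  finally show ?thesis
    by (simp add: q_def algebra_simps)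
qed

lemma sum_Xc_Dmin_expected_potential_le:
  assumes IH: "\<And>x. expected_potential S t (cs @ [x]) \<le> seeding_bound t (cs @ [x]) U"
    and "cs \<noteq> []" "t \<le> card U"
  shows "(\<Sum>s\<in>Xc U. Dmin cs s * expected_potential S t (cs @ [s]))
    \<le> potential cs (Xc U) * seeding_bound t cs U"
proof -
  have "(\<Sum>s\<in>Xc U. Dmin cs s * expected_potential S t (cs @ [s]))
      \<le> (\<Sum>s\<in>Xc U. Dmin cs s * seeding_bound t cs U)"
    using order_trans[OF IH seeding_bound_snoc_le[OF assms(2,3)]]
    by (intro sum_mono mult_left_mono Dmin_nonneg assms(2))
  then show ?thesis
    by (simp add: potential_def sum_distrib_right)
qed

lemma sum_cluster_Dmin_expected_potential_le:
  assumes IH: "\<And>x. expected_potential S t (cs @ [x]) \<le> seeding_bound t (cs @ [x]) (U - {j})"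
    and "cs \<noteq> []" "finite U" "j \<in> U" "t < card U"
  shows "(\<Sum>s\<in>cluster S g j. Dmin cs s * expected_potential S t (cs @ [s]))
    \<le> potential cs (cluster S g j) *
        ((potential cs (Xc U) + 2 * real CARD('n) * opt_cost (Xu U)) * (1 + harm t)
         + (real (card U) - 1 - real t) / (real (card U) - 1)
           * (potential cs (Xu U) - potential cs (cluster S g j)))"
proof -
  define A where "A = cluster S g j"
  define H :: real where "H = 1 + harm t"
  define K where "K = (potential cs (Xc U) + 2 * real CARD('n) * (opt_cost (Xu U) - opt_cost A)) * H
    + (real (card U) - 1 - real t) / (real (card U) - 1) * (potential cs (Xu U) - potential cs A)"
  have H: "0 \<le> H"
    using harm_nonneg[where 'a=real, of t] by (simp add: H_def)
  have "finite A"
    by (simp add: A_def cluster_def finite_S)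
  have opt_A: "opt_cost A = fw_cost A (c j)"
    by (simp add: A_def opt_cost_cluster)
  have "(\<Sum>s\<in>A. Dmin cs s * expected_potential S t (cs @ [s]))
      \<le> (\<Sum>s\<in>A. Dmin cs s * (K + H * potential (cs @ [s]) A))"
    using order_trans[OF IH seeding_bound_Diff_cluster_le[OF assms(2-5)]]
    by (intro sum_mono mult_left_mono Dmin_nonneg assms(2)) (simp add: A_def K_def H_def)
  also have "\<dots> = potential cs A * K + H * (\<Sum>s\<in>A. Dmin cs s * potential (cs @ [s]) A)"
    by (simp add: potential_def sum.distrib sum_distrib_left sum_distrib_right algebra_simps)
  also have "\<dots> \<le> potential cs A * K + H * (2 * real CARD('n) * potential cs A * opt_cost A)"
    using sum_Dmin_mult_potential_snoc_le[OF \<open>finite A\<close> assms(2), of "c j"] H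
    by (intro add_left_mono mult_left_mono) (simp_all add: opt_A)
  finally show ?thesis
    by (simp add: A_def K_def H_def algebra_simps)
qed

lemma expected_potential_Suc_eq_sum_clusters:
  assumes "cs \<noteq> []" "potential cs S \<noteq> 0" "finite U"
  shows "expected_potential S (Suc t) cs
    = ((\<Sum>s\<in>Xc U. Dmin cs s * expected_potential S t (cs @ [s]))
       + (\<Sum>j\<in>U. \<Sum>s\<in>cluster S g j. Dmin cs s * expected_potential S t (cs @ [s])))
      / potential cs S"
  unfolding expected_potential_Suc[OF finite_S S_nonempty] expectation_kpp_next[OF finite_S assms(1,2)]
    sum_Xu_eq_sum_clusters[OF assms(3), symmetric] sum_Xc_add_sum_Xu
  by (simp add: sum_divide_distrib)

lemma sum_clusters_Dmin_expected_potential_le: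
  assumes IH: "\<And>cs U. cs \<noteq> [] \<Longrightarrow> finite U \<Longrightarrow> t \<le> card U \<Longrightarrow>
      expected_potential S t cs \<le> seeding_bound t cs U"
    and "cs \<noteq> []" "finite U" "t < card U"
  defines "K \<equiv> (potential cs (Xc U) + 2 * real CARD('n) * opt_cost (Xu U)) * (1 + harm t)"
    and "q \<equiv> (real (card U) - 1 - real t) / (real (card U) - 1)"
    and "pu \<equiv> potential cs (Xu U)"
    and "xj \<equiv> \<lambda>j. potential cs (cluster S g j)"
  shows "(\<Sum>j\<in>U. \<Sum>s\<in>cluster S g j. Dmin cs s * expected_potential S t (cs @ [s]))
    \<le> K * pu + q * (pu * pu - (\<Sum>j\<in>U. (xj j)\<^sup>2))"
proof -
  have "(\<Sum>j\<in>U. xj j) = pu"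
    unfolding pu_def xj_def potential_def by (simp add: sum_Xu_eq_sum_clusters[OF assms(3)])
  have "(\<Sum>j\<in>U. \<Sum>s\<in>cluster S g j. Dmin cs s * expected_potential S t (cs @ [s]))
      \<le> (\<Sum>j\<in>U. xj j * (K + q * (pu - xj j)))"
    unfolding K_def q_def pu_def xj_def
    using IH assms by (intro sum_mono sum_cluster_Dmin_expected_potential_le) auto
  also have "\<dots> = (\<Sum>j\<in>U. (K + q * pu) * xj j - q * (xj j)\<^sup>2)"
    by (rule sum.cong) (simp_all add: power2_eq_square algebra_simps)
  also have "\<dots> = K * pu + q * (pu * pu - (\<Sum>j\<in>U. (xj j)\<^sup>2))"
    by (simp only: sum_subtractf sum_distrib_left[symmetric] \<open>(\<Sum>j\<in>U. xj j) = pu\<close>)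
      (simp add: algebra_simps)
  finally show ?thesis .
qed

lemma expected_potential_Suc_le:
  assumes IH: "\<And>cs U. cs \<noteq> [] \<Longrightarrow> finite U \<Longrightarrow> t \<le> card U \<Longrightarrow>
      expected_potential S t cs \<le> seeding_bound t cs U"
    and "cs \<noteq> []" "finite U" "Suc t \<le> card U"
  shows "expected_potential S (Suc t) cs \<le> seeding_bound (Suc t) cs U"
proof (cases "potential cs S = 0")
  case True
  then show ?thesis
    using expected_potential_le_potential[OF finite_S S_nonempty assms(2), of "Suc t"]
      seeding_bound_nonneg[OF assms(2,4)] by linarith
next
  case False
  define phi pc pu opt H u sq :: real where "phi = potential cs S" and "pc = potential cs (Xc U)"
    and "pu = potential cs (Xu U)" and "opt = 2 * real CARD('n) * opt_cost (Xu U)"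
    and "H = 1 + harm t" and "u = real (card U)"
    and "sq = (\<Sum>j\<in>U. (potential cs (cluster S g j))\<^sup>2)"
  have "phi > 0"
    using False potential_nonneg[OF assms(2), of S] by (simp add: phi_def)
  have "phi = pc + pu"
    unfolding phi_def pc_def pu_def potential_def by (simp add: sum_Xc_add_sum_Xu)
  have "(\<Sum>j\<in>U. potential cs (cluster S g j)) = pu"
    unfolding pu_def potential_def by (simp add: sum_Xu_eq_sum_clusters[OF assms(3)])
  then have "pu\<^sup>2 \<le> u * sq"
    using sum_squared_le_sum_of_squares[of "\<lambda>j. potential cs (cluster S g j)" U]
    by (simp add: u_def sq_def mult.commute)
  have "expected_potential S t (cs @ [x]) \<le> seeding_bound t (cs @ [x]) U" for x
    using IH assms by simp
  then have "(\<Sum>s\<in>Xc U. Dmin cs s * expected_potential S t (cs @ [s])) \<le> pc * seeding_bound t cs U"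
    unfolding pc_def using assms(2,4) by (intro sum_Xc_Dmin_expected_potential_le) auto
  moreover have "(\<Sum>j\<in>U. \<Sum>s\<in>cluster S g j. Dmin cs s * expected_potential S t (cs @ [s]))
      \<le> (pc + opt) * H * pu + (u - 1 - real t) / (u - 1) * (pu * pu - sq)"
    unfolding pc_def pu_def opt_def H_def u_def sq_def
    using assms by (intro sum_clusters_Dmin_expected_potential_le[OF IH]) auto
  ultimately have "expected_potential S (Suc t) cs
      \<le> (pc * ((pc + opt) * H + ((u - real t) / u) * pu)
        + ((pc + opt) * H * pu + (u - 1 - real t) / (u - 1) * (pu * pu - sq))) / phi"
    unfolding expected_potential_Suc_eq_sum_clusters[OF assms(2) False assms(3)] phi_def[symmetric]
    using \<open>phi > 0\<close>
    by (intro divide_right_mono add_mono) (simp_all add: seeding_bound_def pc_def pu_def opt_def H_def u_def)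
  then have "expected_potential S (Suc t) cs
      \<le> (pc + opt) * (H + 1 / (real t + 1)) + ((u - (real t + 1)) / u) * pu"
    using \<open>phi = pc + pu\<close> \<open>phi > 0\<close> \<open>pu\<^sup>2 \<le> u * sq\<close> assms(2,4) opt_cost_nonneg[of "Xu U"]
    by (intro seeding_step_arith) (auto simp: pc_def pu_def opt_def u_def potential_nonneg)
  then show ?thesis
    by (simp add: seeding_bound_def harm_Suc pc_def pu_def opt_def H_def u_def field_simps)
qed

text \<open>Arthur and Vassilvitskii's Lemma 3.3 with \<open>2 n\<close> in place of \<open>8\<close>.\<close>

lemma expected_potential_le_seeding_bound:
  "cs \<noteq> [] \<Longrightarrow> finite U \<Longrightarrow> t \<le> card U \<Longrightarrow> expected_potential S t cs \<le> seeding_bound t cs U"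
proof (induction t arbitrary: cs U)
  case 0
  have "potential cs (Xu U) \<le> real (card U) / real (card U) * potential cs (Xu U)"
    using 0 by (cases "U = {}") (simp_all add: Xu_def potential_def)
  moreover have "0 \<le> 2 * real CARD('n) * opt_cost (Xu U)" "harm 0 = (0::real)"
    using opt_cost_nonneg[of "Xu U"] by (simp_all add: harm_def)
  ultimately show ?case
    using sum_Xc_add_sum_Xu[of "Dmin cs" U]
    by (simp add: expected_potential_0 seeding_bound_def potential_def)
next
  case (Suc t)
  then show ?case
    by (intro expected_potential_Suc_le) auto
qed

lemma expected_potential_singleton_le:
  assumes "x \<in> S" "\<forall>s\<in>S. g s < k"
  shows "expected_potential S (k - 1) [x]
    \<le> (fw_cost (cluster S g (g x)) x + 2 * real CARD('n) * (opt_cost S - opt_cost (cluster S g (g x))))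
        * (1 + harm (k - 1))"
proof -
  define U where "U = {..<k} - {g x}"
  have "card U = k - 1"
    using assms by (simp add: U_def)
  moreover have "Xc U = cluster S g (g x)" "Xu U = S - cluster S g (g x)"
    using assms(2) by (auto simp: Xc_def Xu_def U_def cluster_def)
  moreover have "opt_cost (S - cluster S g (g x)) = opt_cost S - opt_cost (cluster S g (g x))"
    unfolding opt_cost_def by (rule sum_diff) (auto simp: finite_S cluster_def)
  ultimately show ?thesis
    using expected_potential_le_seeding_bound[of "[x]" U "k - 1"]
    by (simp add: U_def seeding_bound_def potential_singleton)
qed

lemma sum_first_centre_bound_le:
  assumes "\<forall>s\<in>S. g s < k"
  shows "(\<Sum>x\<in>S. fw_cost (cluster S g (g x)) x
      + 2 * real CARD('n) * (opt_cost S - opt_cost (cluster S g (g x))))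
    \<le> 2 * real CARD('n) * real (card S) * opt_cost S"
proof -
  define n where "n = real CARD('n)"
  have group: "(\<Sum>x\<in>S. h x) = (\<Sum>j<k. \<Sum>x\<in>cluster S g j. h x)" for h :: "real^'n \<Rightarrow> real"
    unfolding cluster_def by (rule sum.group[symmetric]) (use assms finite_S in auto)
  have "(\<Sum>x\<in>cluster S g j. fw_cost (cluster S g (g x)) x + 2 * n * (opt_cost S - opt_cost (cluster S g (g x))))
      \<le> 2 * n * real (card (cluster S g j)) * opt_cost S" for j
  proof -
    define A where "A = cluster S g j"
    have "finite A"
      by (simp add: A_def cluster_def finite_S)
    have "(\<Sum>x\<in>A. fw_cost (cluster S g (g x)) x + 2 * n * (opt_cost S - opt_cost (cluster S g (g x))))
        = (\<Sum>x\<in>A. fw_cost A x) + real (card A) * (2 * n * (opt_cost S - opt_cost A))"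
      by (simp add: sum.distrib A_def cluster_def)
    also have "\<dots> \<le> n * real (card A) * opt_cost A + real (card A) * (2 * n * (opt_cost S - opt_cost A))"
      using sum_fw_cost_le[OF \<open>finite A\<close>, of "c j"] by (simp add: n_def A_def opt_cost_cluster)
    also have "\<dots> \<le> 2 * n * real (card A) * opt_cost S"
      using opt_cost_nonneg[of A] by (simp add: n_def algebra_simps mult_left_mono)
    finally show ?thesis
      by (simp add: A_def)
  qed
  then have "(\<Sum>x\<in>S. fw_cost (cluster S g (g x)) x + 2 * n * (opt_cost S - opt_cost (cluster S g (g x))))
      \<le> (\<Sum>j<k. 2 * n * real (card (cluster S g j)) * opt_cost S)"
    unfolding group by (rule sum_mono)
  also have "\<dots> = 2 * n * real (card S) * opt_cost S"
    using group[of "\<lambda>_. 1"] by (simp add: sum_distrib_right[symmetric] sum_distrib_left[symmetric])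
  finally show ?thesis
    by (simp add: n_def)
qed

lemma expected_kpp_potential_le:
  assumes "0 < k" "\<forall>s\<in>S. g s < k"
  shows "measure_pmf.expectation (kpp_seeds S k) (\<lambda>cs. potential cs S)
    \<le> 2 * real CARD('n) * (1 + harm (k - 1)) * (\<Sum>s\<in>S. tdist s (c (g s)))"
proof -
  have "measure_pmf.expectation (kpp_seeds S k) (\<lambda>cs. potential cs S)
      = measure_pmf.expectation (pmf_of_set S) (\<lambda>x. expected_potential S (k - 1) [x])"
    using expected_potential_Suc[OF finite_S S_nonempty, of "k - 1" "[]"] assms(1)
    by (simp add: kpp_seeds_eq_kpp_extend expected_potential_def kpp_next_def)
  also have "\<dots> = (\<Sum>x\<in>S. expected_potential S (k - 1) [x]) / real (card S)"
    by (rule integral_pmf_of_set[OF S_nonempty finite_S])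
  also have "\<dots> \<le> (\<Sum>x\<in>S. (fw_cost (cluster S g (g x)) x
      + 2 * real CARD('n) * (opt_cost S - opt_cost (cluster S g (g x)))) * (1 + harm (k - 1))) / real (card S)"
    using expected_potential_singleton_le assms(2) by (intro divide_right_mono sum_mono) auto
  also have "\<dots> \<le> 2 * real CARD('n) * real (card S) * opt_cost S * (1 + harm (k - 1)) / real (card S)"
    unfolding sum_distrib_right[symmetric]
    using sum_first_centre_bound_le[OF assms(2)] harm_nonneg[where 'a=real, of "k - 1"]
    by (intro divide_right_mono mult_right_mono) auto
  also have "\<dots> = 2 * real CARD('n) * (1 + harm (k - 1)) * opt_cost S"
    using finite_S S_nonempty by (simp add: card_gt_0_iff)
  finally show ?thesis
    by (simp only: opt_cost_def)
qed

end

lemma kmeans_output_kloss_le_potential: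
  assumes "finite S" "kmeans_output S k (\<lambda>i. cs ! i) a" "length cs = k"
  shows "kloss S k a \<le> potential cs S"
  using kmeans_output_kloss_le[OF assms(1,2)] assms(3) by (simp add: potential_def Dmin_eq_Min_nth)

lemma lstar_nonneg: "0 < k \<Longrightarrow> 0 \<le> lstar S k"
  unfolding lstar_def by (intro cInf_greatest) (auto intro!: sum_nonneg Min.boundedI simp: tdist_nonneg)

lemma nearest_centre_exists:
  fixes c :: "nat \<Rightarrow> real^'n"
  assumes "0 < k"
  obtains g where "\<And>s. g s < k" "\<And>s. tdist s (c (g s)) = Min ((\<lambda>i. tdist s (c i)) ` {..<k})"
proof -
  have "\<forall>s. \<exists>i. i < k \<and> tdist s (c i) = Min ((\<lambda>i. tdist s (c i)) ` {..<k})"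
  proof
    fix s
    have "Min ((\<lambda>i. tdist s (c i)) ` {..<k}) \<in> (\<lambda>i. tdist s (c i)) ` {..<k}"
      by (rule Min_in) (use assms in auto)
    then show "\<exists>i. i < k \<and> tdist s (c i) = Min ((\<lambda>i. tdist s (c i)) ` {..<k})"
      by auto
  qed
  then show thesis
    using that by metis
qed

lemma expected_kpp_potential_le_lstar:
  fixes S :: "(real^'n) set"
  assumes "finite S" "0 < k" "k \<le> card S"
  shows "measure_pmf.expectation (kpp_seeds S k) (\<lambda>cs. potential cs S)
    \<le> 2 * real CARD('n) * (1 + harm (k - 1)) * lstar S k"
proof -
  define B where "B = 2 * real CARD('n) * (1 + harm (k - 1))"
  define E where "E = measure_pmf.expectation (kpp_seeds S k) (\<lambda>cs. potential cs S)"
  have "B > 0"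
    unfolding B_def using harm_nonneg[where 'a=real, of "k - 1"] by (intro mult_pos_pos) auto
  have "S \<noteq> {}"
    using assms by auto
  have "E / B \<le> (\<Sum>s\<in>S. Min ((\<lambda>i. tdist s (c i)) ` {..<k}))" for c
  proof -
    obtain g where g: "\<And>s. g s < k" "\<And>s. tdist s (c (g s)) = Min ((\<lambda>i. tdist s (c i)) ` {..<k})"
      using nearest_centre_exists[OF assms(2)] by blast
    have "E \<le> B * (\<Sum>s\<in>S. tdist s (c (g s)))"
      unfolding E_def B_def using expected_kpp_potential_le[OF assms(1) \<open>S \<noteq> {}\<close> assms(2)] g(1) by simp
    then show ?thesis
      using \<open>B > 0\<close> by (simp add: g(2) pos_divide_le_eq mult.commute)
  qed
  then have "E / B \<le> lstar S k"
    unfolding lstar_def by (intro cInf_greatest) auto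
  then show ?thesis
    using \<open>B > 0\<close> by (simp add: E_def B_def pos_divide_le_eq mult.commute)
qed

lemma one_add_harm_pred_le: "0 < k \<Longrightarrow> 1 + harm (k - 1) \<le> 2 + ln (real k)"
proof -
  assume "0 < k"
  then have "harm k - ln (real k) \<le> harm 1 - ln (real (1::nat))"
    by (intro euler_mascheroni_sequence_decreasing) auto
  moreover have "harm (k - 1) \<le> (harm k :: real)"
    by (rule harm_mono) simp
  ultimately show ?thesis
    by (simp add: harm_def)
qed

theorem mainTheorem3:
  fixes S :: "(real^'n) set" and k :: nat
    and out :: "(real^'n) list \<Rightarrow> (real^'n \<Rightarrow> nat)"
  assumes "finite S"
    and "\<forall>x\<in>S. \<forall>y\<in>S. tequiv x y \<longrightarrow> x = y"
    and "0 < k" and "k \<le> card S"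
    and "\<forall>cs\<in>set_pmf (kpp_seeds S k). kmeans_output S k (\<lambda>i. cs ! i) (out cs)"
  shows "measure_pmf.expectation (kpp_seeds S k) (\<lambda>cs. kloss S k (out cs) / lstar S k)
           \<le> 2 * real CARD('n) * (2 + ln (real k))"
proof -
  \<comment> \<open>The bound holds for arbitrary finite \<open>S\<close>.\<close>
  have "S \<noteq> {}"
    using assms(3,4) by auto
  have "measure_pmf.expectation (kpp_seeds S k) (\<lambda>cs. kloss S k (out cs) / lstar S k)
      \<le> 2 * real CARD('n) * (1 + harm (k - 1))"
  proof (rule expectation_divide_le)
    show "kloss S k (out cs) \<le> potential cs S" if "cs \<in> set_pmf (kpp_seeds S k)" for cs
      using that assms(5) by (intro kmeans_output_kloss_le_potential[OF assms(1)] length_kpp_seeds) auto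
  qed (use finite_set_pmf_kpp_seeds[OF assms(1) \<open>S \<noteq> {}\<close>]
      expected_kpp_potential_le_lstar[OF assms(1,3,4)] lstar_nonneg[OF assms(3)]
      harm_nonneg[where 'a=real, of "k - 1"] in auto)
  also have "\<dots> \<le> 2 * real CARD('n) * (2 + ln (real k))"
    using one_add_harm_pred_le[OF assms(3)] by simp
  finally show ?thesis .
qed

end
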